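(* Let $A\in\mathbb{M}_m(\mathbb{M}_n)$ be positive semidefinite. Then \[ (\mathrm{tr} A)^{mn}+\big(\det(\mathrm{tr}_1 A)\big)^m\ge \det A+\big(\det(\mathrm{tr}_2 A)\big)^n, \] and \[ (\mathrm{tr} A)^{mn}+\big(\det(\mathrm{tr}_2 A)\big)^n\ge \det A+\big(\det(\mathrm{tr}_1 A)\big)^m. \]
   Context: $\mathbb{M}_m(\mathbb{M}_n)$ denotes the set of $mn\times mn$ complex matrices partitioned as $A=[A_{i,j}]_{i,j=1}^m$ with each block $A_{i,j}$ an $n\times n$ complex matrix. The partial traces are $\mathrm{tr}_1 A=\sum_{i=1}^m A_{i,i}\in\mathbb{M}_n$ and $\mathrm{tr}_2 A=[\mathrm{tr}\,A_{i,j}]_{i,j=1}^m\in\mathbb{M}_m$. *)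

theory Defs
  imports "Jordan_Normal_Form.Determinant" "Jordan_Normal_Form.Conjugate"
begin

text \<open>A matrix in M_m(M_n) is an (m*n) x (m*n) complex matrix; the block A_{i,j}
  (i,j < m) has entry (k,l) (k,l < n) at position (i*n+k, j*n+l).\<close>

definition psd_mat :: "nat \<Rightarrow> complex mat \<Rightarrow> bool" where
  "psd_mat N A \<longleftrightarrow> A \<in> carrier_mat N N
     \<and> (\<forall>i<N. \<forall>j<N. A $$ (i, j) = cnj (A $$ (j, i)))
     \<and> (\<forall>x \<in> carrier_vec N. 0 \<le> Re (\<Sum>i<N. \<Sum>j<N. cnj (x $ i) * A $$ (i, j) * x $ j))"

definition mtrace :: "complex mat \<Rightarrow> complex" where
  "mtrace A = (\<Sum>i<dim_row A. A $$ (i, i))"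

text \<open>tr_1 A = sum of diagonal blocks (an n x n matrix).\<close>
definition ptrace1 :: "nat \<Rightarrow> nat \<Rightarrow> complex mat \<Rightarrow> complex mat" where
  "ptrace1 m n A = mat n n (\<lambda>(k, l). \<Sum>i<m. A $$ (i * n + k, i * n + l))"

text \<open>tr_2 A = [tr A_{i,j}] (an m x m matrix).\<close>
definition ptrace2 :: "nat \<Rightarrow> nat \<Rightarrow> complex mat \<Rightarrow> complex mat" where
  "ptrace2 m n A = mat m m (\<lambda>(i, j). \<Sum>k<n. A $$ (i * n + k, j * n + k))"

end

theory Submission
  imports Defs "Jordan_Normal_Form.Schur_Decomposition"
begin

(* The partial traces of A are sums of principal compressions of A, hence positive semidefinite,
   and all three matrices A, tr_1 A, tr_2 A have the same trace t.  Their determinants are thus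
   products of mn, n and m nonnegative eigenvalues summing to t, and a product of k >= 2
   nonnegative numbers with sum t is at most t^k/4.  For m >= 2 this gives det A <= t^(mn)/4 and
   (det tr_2 A)^n <= (t^m/4)^n <= t^(mn)/4, so det A + (det tr_2 A)^n <= t^(mn) already; for m = 1
   we have tr_1 A = A and tr_2 A = tr A, and the first inequality is an equality.  The second
   inequality is the same argument with m and n exchanged. *)

lemma prod_list_le_sum_list_power:
  fixes xs :: "'a :: linordered_semidom list"
  assumes "\<And>x. x \<in> set xs \<Longrightarrow> 0 \<le> x"
  shows "prod_list xs \<le> sum_list xs ^ length xs"
  using assms
proof (induction xs)
  case Nil
  then show ?case by simp
next
  case (Cons x xs)
  have x: "0 \<le> x" and s: "0 \<le> sum_list xs" and p: "0 \<le> prod_list xs"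
    using Cons.prems by (auto intro: sum_list_nonneg prod_list_nonneg)
  have "prod_list xs \<le> sum_list xs ^ length xs"
    using Cons by simp
  also have "\<dots> \<le> (x + sum_list xs) ^ length xs"
    using x s by (intro power_mono) auto
  finally have "prod_list xs \<le> (x + sum_list xs) ^ length xs" .
  then have "x * prod_list xs \<le> (x + sum_list xs) * (x + sum_list xs) ^ length xs"
    using x s p by (intro mult_mono) auto
  then show ?case by simp
qed

lemma prod_list_le_sum_list_power_div_4:
  fixes xs :: "'a :: linordered_field list"
  assumes nonneg: "\<And>x. x \<in> set xs \<Longrightarrow> 0 \<le> x" and len: "2 \<le> length xs"
  shows "prod_list xs \<le> sum_list xs ^ length xs / 4"
proof -
  obtain a b ys where xs: "xs = a # b # ys"
    using len by (metis One_nat_def Suc_1 Suc_le_length_iff)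
  have a: "0 \<le> a" and b: "0 \<le> b" and ys: "\<And>y. y \<in> set ys \<Longrightarrow> 0 \<le> y"
    using nonneg xs by auto
  have s: "0 \<le> sum_list ys" and p: "0 \<le> prod_list ys"
    using ys by (auto intro: sum_list_nonneg prod_list_nonneg)
  have ab: "a * b \<le> (a + b)\<^sup>2 / 4"
    using sum_squares_ge_zero[of "a - b" 0] by (simp add: power2_eq_square field_simps)
  have "prod_list xs = (a * b) * prod_list ys"
    using xs by simp
  also have "\<dots> \<le> ((a + b)\<^sup>2 / 4) * sum_list ys ^ length ys"
    using ab a b p prod_list_le_sum_list_power[OF ys] by (intro mult_mono) auto
  also have "\<dots> \<le> ((a + b + sum_list ys)\<^sup>2 / 4) * (a + b + sum_list ys) ^ length ys"
    using a b s by (intro mult_mono divide_right_mono power_mono) auto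
  also have "\<dots> = sum_list xs ^ length xs / 4"
    using xs by (simp add: power_add[symmetric] add.assoc)
  finally show ?thesis .
qed

lemma block_index_less:
  fixes i k m n :: nat
  assumes "i < m" and "k < n"
  shows "i * n + k < m * n"
  using assms by (metis add_less_cancel_left less_le_trans mult_Suc mult_le_mono1 Suc_leI add.commute)

lemma sum_lessThan_mult:
  fixes f :: "nat \<Rightarrow> 'a :: comm_monoid_add"
  shows "(\<Sum>j<m * n. f j) = (\<Sum>i<m. \<Sum>k<n. f (i * n + k))"
proof -
  have "sum f {i * n..<i * n + n} = (\<Sum>k<n. f (i * n + k))" for i
    using sum.shift_bounds_nat_ivl[of f 0 "i * n" n] by (simp add: add.commute atLeast0LessThan)
  then show ?thesis
    by (simp flip: sum.nat_group)
qed

lemma mtrace_mult_comm: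
  assumes "A \<in> carrier_mat k l" and "B \<in> carrier_mat l k"
  shows "mtrace (A * B) = mtrace (B * A)"
proof -
  have "mtrace (A * B) = (\<Sum>i<k. \<Sum>j<l. A $$ (i, j) * B $$ (j, i))"
    using assms unfolding mtrace_def
    by (auto simp: scalar_prod_def lessThan_atLeast0 intro!: sum.cong)
  also have "\<dots> = (\<Sum>j<l. \<Sum>i<k. B $$ (j, i) * A $$ (i, j))"
    by (subst sum.swap) (simp add: mult.commute)
  also have "\<dots> = mtrace (B * A)"
    using assms unfolding mtrace_def
    by (auto simp: scalar_prod_def lessThan_atLeast0 intro!: sum.cong)
  finally show ?thesis .
qed

lemma mtrace_similar_mat:
  assumes "similar_mat A B"
  shows "mtrace A = mtrace B"
proof -
  obtain n P Q where "{A, B, P, Q} \<subseteq> carrier_mat n n"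
    and QP: "Q * P = 1\<^sub>m n" and A: "A = P * B * Q"
    using similar_matD[OF assms] by blast
  then have B: "B \<in> carrier_mat n n" and P: "P \<in> carrier_mat n n" and Q: "Q \<in> carrier_mat n n"
    by auto
  have "mtrace A = mtrace (Q * (P * B))"
    unfolding A using B P Q by (intro mtrace_mult_comm[of _ n n]) auto
  also have "Q * (P * B) = B"
    using B P Q QP by (simp add: assoc_mult_mat[symmetric, of Q n n P n B n])
  finally show ?thesis .
qed

lemma mtrace_eq_sum_list_diag_mat: "mtrace A = sum_list (diag_mat A)"
  unfolding mtrace_def diag_mat_def
  by (simp only: sum_set_upt_conv_sum_list_nat[symmetric] set_upt lessThan_atLeast0)

definition quadratic_form :: "nat \<Rightarrow> complex mat \<Rightarrow> complex vec \<Rightarrow> complex" where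
  "quadratic_form N A x = (\<Sum>i<N. \<Sum>j<N. cnj (x $ i) * A $$ (i, j) * x $ j)"

lemma psd_matI:
  assumes "A \<in> carrier_mat N N" and "\<And>i j. i < N \<Longrightarrow> j < N \<Longrightarrow> A $$ (i, j) = cnj (A $$ (j, i))"
    and "\<And>x. x \<in> carrier_vec N \<Longrightarrow> 0 \<le> Re (quadratic_form N A x)"
  shows "psd_mat N A"
  using assms unfolding psd_mat_def quadratic_form_def by blast

lemma psd_mat_carrier: "psd_mat N A \<Longrightarrow> A \<in> carrier_mat N N"
  unfolding psd_mat_def by blast

lemma psd_mat_hermitian: "psd_mat N A \<Longrightarrow> i < N \<Longrightarrow> j < N \<Longrightarrow> A $$ (i, j) = cnj (A $$ (j, i))"
  unfolding psd_mat_def by blast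

lemma psd_mat_quadratic_form_nonneg:
  "psd_mat N A \<Longrightarrow> x \<in> carrier_vec N \<Longrightarrow> 0 \<le> Re (quadratic_form N A x)"
  unfolding psd_mat_def quadratic_form_def by blast

lemma quadratic_form_mat:
  "quadratic_form n (mat n n g) x = (\<Sum>i<n. \<Sum>j<n. cnj (x $ i) * g (i, j) * x $ j)"
  unfolding quadratic_form_def by (auto intro!: sum.cong)

lemma quadratic_form_hermitian_real:
  assumes "\<And>i j. i < N \<Longrightarrow> j < N \<Longrightarrow> A $$ (i, j) = cnj (A $$ (j, i))"
  shows "quadratic_form N A x \<in> \<real>"
proof -
  have herm: "cnj (A $$ (i, j)) = A $$ (j, i)" if "i < N" "j < N" for i j
    using assms[OF that(2,1)] by simp
  have "cnj (quadratic_form N A x) = (\<Sum>i<N. \<Sum>j<N. x $ i * cnj (A $$ (i, j)) * cnj (x $ j))"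
    unfolding quadratic_form_def by simp
  also have "\<dots> = (\<Sum>i<N. \<Sum>j<N. x $ i * A $$ (j, i) * cnj (x $ j))"
    using herm by (intro sum.cong refl) simp
  also have "\<dots> = quadratic_form N A x"
    unfolding quadratic_form_def by (subst sum.swap) (simp add: mult_ac)
  finally show ?thesis
    by (metis Reals_cnj_iff)
qed

lemma quadratic_form_eigenvector:
  assumes "B \<in> carrier_mat k k" and "v \<in> carrier_vec k" and "B *\<^sub>v v = e \<cdot>\<^sub>v v"
  shows "quadratic_form k B v = e * of_real (\<Sum>i<k. (cmod (v $ i))\<^sup>2)"
proof -
  have "quadratic_form k B v = (\<Sum>i<k. cnj (v $ i) * (B *\<^sub>v v) $ i)"
    using assms(1,2) unfolding quadratic_form_def
    by (auto simp: scalar_prod_def sum_distrib_left mult.assoc lessThan_atLeast0 intro!: sum.cong)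
  also have "\<dots> = e * (\<Sum>i<k. v $ i * cnj (v $ i))"
    using assms(2,3) by (auto simp: sum_distrib_left intro!: sum.cong)
  also have "(\<Sum>i<k. v $ i * cnj (v $ i)) = of_real (\<Sum>i<k. (cmod (v $ i))\<^sup>2)"
    by (simp only: of_real_sum complex_norm_square)
  finally show ?thesis .
qed

lemma psd_mat_eigenvalue_nonneg:
  assumes psd: "psd_mat k B" and ev: "eigenvalue B e"
  shows "0 \<le> e"
proof -
  have B: "B \<in> carrier_mat k k"
    using psd by (rule psd_mat_carrier)
  obtain v where v: "v \<in> carrier_vec k" "v \<noteq> 0\<^sub>v k" and Bv: "B *\<^sub>v v = e \<cdot>\<^sub>v v"
    using ev B unfolding eigenvalue_def eigenvector_def by auto
  define s where "s = (\<Sum>i<k. (cmod (v $ i))\<^sup>2)"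
  obtain i where "i < k" "v $ i \<noteq> 0"
    using v by (auto simp: vec_eq_iff)
  then have "0 < s"
    unfolding s_def by (intro sum_pos2[of _ i]) auto
  have "quadratic_form k B v = e * of_real s"
    unfolding s_def using B v(1) Bv by (rule quadratic_form_eigenvector)
  moreover have "quadratic_form k B v \<in> \<real>"
    using psd_mat_hermitian[OF psd] by (rule quadratic_form_hermitian_real)
  moreover have "0 \<le> Re (quadratic_form k B v)"
    using psd v(1) by (rule psd_mat_quadratic_form_nonneg)
  ultimately show ?thesis
    using \<open>0 < s\<close> by (auto simp: less_eq_complex_def complex_is_Real_iff zero_le_mult_iff)
qed

lemma psd_mat_spectrum:
  assumes psd: "psd_mat k B"
  obtains rs :: "real list" where "length rs = k" and "\<And>r. r \<in> set rs \<Longrightarrow> 0 \<le> r"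
    and "det B = of_real (prod_list rs)" and "mtrace B = of_real (sum_list rs)"
proof -
  have B: "B \<in> carrier_mat k k"
    using psd by (rule psd_mat_carrier)
  obtain es where cp: "char_poly B = (\<Prod>e\<leftarrow>es. [:- e, 1:])" and len: "length es = k"
    using char_poly_factorized[OF B] by blast
  obtain C P Q where "schur_decomposition B es = (C, P, Q)"
    by (cases "schur_decomposition B es") auto
  from schur_decomposition[OF B cp this] have sim: "similar_mat B C"
    and ut: "upper_triangular C" and diag: "diag_mat C = es" and C: "C \<in> carrier_mat k k"
    using B unfolding similar_mat_def similar_mat_wit_def by (auto simp: Let_def)
  have det: "det B = prod_list es"
    using det_similar[OF sim] det_upper_triangular[OF ut C] diag by simp
  have tr: "mtrace B = sum_list es"
    using mtrace_similar_mat[OF sim] mtrace_eq_sum_list_diag_mat[of C] diag by simp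
  have nonneg: "0 \<le> e" if "e \<in> set es" for e
  proof (rule psd_mat_eigenvalue_nonneg[OF psd])
    have "poly (char_poly B) e = 0"
      unfolding cp poly_prod_list using that by (auto simp: prod_list_zero_iff)
    then show "eigenvalue B e"
      using eigenvalue_root_char_poly[OF B] by simp
  qed
  then have es: "es = map (of_real \<circ> Re) es"
    by (intro map_idI[symmetric]) (auto simp: less_eq_complex_def complex_eq_iff)
  show ?thesis
  proof
    show "length (map Re es) = k" "\<And>r. r \<in> set (map Re es) \<Longrightarrow> 0 \<le> r"
      using len nonneg by (auto simp: less_eq_complex_def)
    show "det B = of_real (prod_list (map Re es))" "mtrace B = of_real (sum_list (map Re es))"
      using det tr es by (simp_all add: of_real_hom.hom_prod_list of_real_hom.hom_sum_list)
  qed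
qed

lemma psd_mat_det_trace_real:
  assumes "psd_mat k B"
  obtains d t :: real where "det B = of_real d" and "mtrace B = of_real t"
    and "0 \<le> d" and "0 \<le> t" and "2 \<le> k \<Longrightarrow> d \<le> t ^ k / 4"
proof -
  obtain rs where len: "length rs = k" and nonneg: "\<And>r. r \<in> set rs \<Longrightarrow> 0 \<le> r"
    and det: "det B = of_real (prod_list rs)" and tr: "mtrace B = of_real (sum_list rs)"
    using psd_mat_spectrum[OF assms] by blast
  show ?thesis
    by (rule that[OF det tr prod_list_nonneg[OF nonneg] sum_list_nonneg[OF nonneg]])
      (use len prod_list_le_sum_list_power_div_4[OF nonneg] in auto)
qed

lemma psd_mat_det_power_nonneg:
  assumes "psd_mat k B"
  shows "0 \<le> det B ^ j"
proof -
  obtain d :: real where "det B = of_real d" and "0 \<le> d"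
    using psd_mat_det_trace_real[OF assms] by blast
  then show ?thesis
    by (simp add: less_eq_complex_def flip: of_real_power)
qed

lemma psd_mat_compression:
  assumes A: "psd_mat N A" and inj: "inj_on f {..<n}" and range: "f ` {..<n} \<subseteq> {..<N}"
  shows "psd_mat n (mat n n (\<lambda>(k, l). A $$ (f k, f l)))" (is "psd_mat n ?B")
proof (rule psd_matI)
  show "?B \<in> carrier_mat n n"
    by simp
next
  fix k l assume "k < n" "l < n"
  then show "?B $$ (k, l) = cnj (?B $$ (l, k))"
    using range psd_mat_hermitian[OF A, of "f k" "f l"] by auto
next
  fix x :: "complex vec"
  let ?F = "f ` {..<n}" and ?g = "the_inv_into {..<n} f"
  have reindex: "(\<Sum>j<N. if j \<in> ?F then h j else 0) = (\<Sum>k<n. h (f k))" for h :: "nat \<Rightarrow> complex"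
    using inj range by (simp add: sum.If_cases Int_absorb1 sum.reindex)
  define y where "y = vec N (\<lambda>j. if j \<in> ?F then x $ ?g j else 0)"
  have "quadratic_form N A y
      = (\<Sum>i<N. if i \<in> ?F then (\<Sum>j<N. if j \<in> ?F
           then cnj (x $ ?g i) * A $$ (i, j) * x $ ?g j else 0) else 0)"
    unfolding quadratic_form_def y_def by (auto intro!: sum.cong)
  also have "\<dots> = quadratic_form n ?B x"
    using inj by (simp add: reindex quadratic_form_mat the_inv_into_f_f)
  finally show "0 \<le> Re (quadratic_form n ?B x)"
    using psd_mat_quadratic_form_nonneg[OF A, of y] by (simp add: y_def)
qed

lemma psd_mat_sum:
  assumes "finite I" and psd: "\<And>i. i \<in> I \<Longrightarrow> psd_mat n (mat n n (g i))"
  shows "psd_mat n (mat n n (\<lambda>kl. \<Sum>i\<in>I. g i kl))" (is "psd_mat n ?B")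
proof (rule psd_matI)
  show "?B \<in> carrier_mat n n"
    by simp
next
  fix k l assume kl: "k < n" "l < n"
  have "g i (k, l) = cnj (g i (l, k))" if "i \<in> I" for i
    using psd_mat_hermitian[OF psd[OF that] kl] kl by simp
  then show "?B $$ (k, l) = cnj (?B $$ (l, k))"
    using kl by (simp add: cnj_sum)
next
  fix x :: "complex vec" assume x: "x \<in> carrier_vec n"
  have "quadratic_form n ?B x = (\<Sum>i\<in>I. quadratic_form n (mat n n (g i)) x)"
    unfolding quadratic_form_mat
    by (simp add: sum_distrib_left sum_distrib_right sum.swap[of _ I])
  then show "0 \<le> Re (quadratic_form n ?B x)"
    using psd_mat_quadratic_form_nonneg[OF psd x] by (simp add: Re_sum sum_nonneg)
qed

lemma mtrace_ptrace1:
  assumes "A \<in> carrier_mat (m * n) (m * n)"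
  shows "mtrace (ptrace1 m n A) = mtrace A"
proof -
  have "mtrace (ptrace1 m n A) = (\<Sum>k<n. \<Sum>i<m. A $$ (i * n + k, i * n + k))"
    by (simp add: mtrace_def ptrace1_def)
  also have "\<dots> = mtrace A"
    using assms by (simp add: mtrace_def sum_lessThan_mult sum.swap[of _ "{..<n}"])
  finally show ?thesis .
qed

lemma mtrace_ptrace2:
  assumes "A \<in> carrier_mat (m * n) (m * n)"
  shows "mtrace (ptrace2 m n A) = mtrace A"
  using assms by (simp add: mtrace_def ptrace2_def sum_lessThan_mult)

lemma psd_ptrace1:
  assumes "psd_mat (m * n) A"
  shows "psd_mat n (ptrace1 m n A)"
proof -
  have "psd_mat n (mat n n (\<lambda>(k, l). A $$ (i * n + k, i * n + l)))" if "i < m" for i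
    using that by (intro psd_mat_compression[OF assms]) (auto simp: inj_on_def block_index_less)
  then have "psd_mat n (mat n n (\<lambda>kl. \<Sum>i<m. (\<lambda>(k, l). A $$ (i * n + k, i * n + l)) kl))"
    by (intro psd_mat_sum) auto
  then show ?thesis
    by (simp add: ptrace1_def case_prod_unfold)
qed

lemma psd_ptrace2:
  assumes "psd_mat (m * n) A"
  shows "psd_mat m (ptrace2 m n A)"
proof -
  have "psd_mat m (mat m m (\<lambda>(i, j). A $$ (i * n + k, j * n + k)))" if "k < n" for k
    using that by (intro psd_mat_compression[OF assms]) (auto simp: inj_on_def block_index_less)
  then have "psd_mat m (mat m m (\<lambda>ij. \<Sum>k<n. (\<lambda>(i, j). A $$ (i * n + k, j * n + k)) ij))"
    by (intro psd_mat_sum) auto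
  then show ?thesis
    by (simp add: ptrace2_def case_prod_unfold)
qed

lemma ptrace1_single_block:
  assumes "A \<in> carrier_mat n n"
  shows "ptrace1 1 n A = A"
  using assms by (auto simp: ptrace1_def intro: eq_matI)

lemma det_ptrace2_single_block:
  assumes "A \<in> carrier_mat n n"
  shows "det (ptrace2 1 n A) = mtrace A"
  using assms by (simp add: det_single ptrace2_def mtrace_def)

lemma ptrace2_scalar_blocks:
  assumes "A \<in> carrier_mat m m"
  shows "ptrace2 m 1 A = A"
  using assms by (auto simp: ptrace2_def intro: eq_matI)

lemma det_ptrace1_scalar_blocks:
  assumes "A \<in> carrier_mat m m"
  shows "det (ptrace1 m 1 A) = mtrace A"
  using assms by (simp add: det_single ptrace1_def mtrace_def)

lemma det_add_det_power_le_mtrace_power: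
  assumes A: "psd_mat (m * n) A" and Q: "psd_mat m Q" and tr: "mtrace Q = mtrace A"
    and m: "2 \<le> m" and n: "1 \<le> n"
  shows "det A + det Q ^ n \<le> mtrace A ^ (m * n)"
proof -
  have "2 \<le> m * n"
    using mult_le_mono[OF m n] by simp
  obtain d t where dA: "det A = of_real d" and tA: "mtrace A = of_real t"
    and t: "0 \<le> t" and d_le: "2 \<le> m * n \<Longrightarrow> d \<le> t ^ (m * n) / 4"
    using psd_mat_det_trace_real[OF A] by blast
  obtain q t' where dQ: "det Q = of_real q" and tQ: "mtrace Q = of_real t'"
    and q: "0 \<le> q" and q_le: "2 \<le> m \<Longrightarrow> q \<le> t' ^ m / 4"
    using psd_mat_det_trace_real[OF Q] by blast
  have "t' = t"
    using tr tA tQ by simp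
  have "q ^ n \<le> (t ^ m / 4) ^ n"
    using q q_le m \<open>t' = t\<close> by (intro power_mono) auto
  also have "\<dots> = t ^ (m * n) / 4 ^ n"
    by (simp add: power_divide power_mult)
  also have "\<dots> \<le> t ^ (m * n) / 4"
    using n t by (intro divide_left_mono) (auto simp: self_le_power)
  finally have "d + q ^ n \<le> t ^ (m * n)"
    using d_le \<open>2 \<le> m * n\<close> zero_le_power[OF t, of "m * n"] by linarith
  then show ?thesis
    using dA dQ tA by (simp add: less_eq_complex_def flip: of_real_power)
qed

lemma det_add_det_ptrace2_power_le:
  assumes "psd_mat (m * n) A"
  shows "det A + det (ptrace2 m n A) ^ n \<le> mtrace A ^ (m * n) + det (ptrace1 m n A) ^ m"
proof -
  have A: "A \<in> carrier_mat (m * n) (m * n)"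
    using assms by (rule psd_mat_carrier)
  consider "m = 0 \<or> n = 0" | "m = 1" | "2 \<le> m" "1 \<le> n"
    by linarith
  then show ?thesis
  proof cases
    case 1
    then show ?thesis
      using A by (auto simp: ptrace1_def ptrace2_def)
  next
    case 2
    with A have A1: "A \<in> carrier_mat n n"
      by simp
    show ?thesis
      unfolding 2 ptrace1_single_block[OF A1] det_ptrace2_single_block[OF A1] by simp
  next
    case 3
    then have "det A + det (ptrace2 m n A) ^ n \<le> mtrace A ^ (m * n)"
      by (intro det_add_det_power_le_mtrace_power[OF assms psd_ptrace2[OF assms] mtrace_ptrace2[OF A]])
    then show ?thesis
      by (rule add_increasing2[OF psd_mat_det_power_nonneg[OF psd_ptrace1[OF assms]]])
  qed
qed

lemma det_add_det_ptrace1_power_le: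
  assumes "psd_mat (m * n) A"
  shows "det A + det (ptrace1 m n A) ^ m \<le> mtrace A ^ (m * n) + det (ptrace2 m n A) ^ n"
proof -
  have A: "A \<in> carrier_mat (m * n) (m * n)"
    using assms by (rule psd_mat_carrier)
  consider "m = 0 \<or> n = 0" | "n = 1" | "2 \<le> n" "1 \<le> m"
    by linarith
  then show ?thesis
  proof cases
    case 1
    then show ?thesis
      using A by (auto simp: ptrace1_def ptrace2_def)
  next
    case 2
    with A have A1: "A \<in> carrier_mat m m"
      by simp
    show ?thesis
      unfolding 2 ptrace2_scalar_blocks[OF A1] det_ptrace1_scalar_blocks[OF A1] by simp
  next
    case 3
    moreover have "psd_mat (n * m) A"
      using assms by (simp add: mult.commute)
    ultimately have "det A + det (ptrace1 m n A) ^ m \<le> mtrace A ^ (n * m)"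
      by (intro det_add_det_power_le_mtrace_power[OF _ psd_ptrace1[OF assms] mtrace_ptrace1[OF A]])
    then show ?thesis
      by (simp add: mult.commute add_increasing2[OF psd_mat_det_power_nonneg[OF psd_ptrace2[OF assms]]])
  qed
qed

theorem proposition4p6:
  fixes m n :: nat and A :: "complex mat"
  assumes "psd_mat (m * n) A"
  shows "det A + (det (ptrace2 m n A)) ^ n \<le> (mtrace A) ^ (m * n) + (det (ptrace1 m n A)) ^ m
     \<and> det A + (det (ptrace1 m n A)) ^ m \<le> (mtrace A) ^ (m * n) + (det (ptrace2 m n A)) ^ n"
  using det_add_det_ptrace2_power_le[OF assms] det_add_det_ptrace1_power_le[OF assms] ..

end
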